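(* Let $(\xi,\sigma)$ be a (sufficiently regular, global) solution of the normalized flow described below on $[0,\infty)\times\mathbb S^1$. Then: (i) $\tau\mapsto\int_0^1|\xi(\tau,s)|^2ds$ is monotone increasing, and $\int_0^1|\xi(\tau,s)|^2ds\le\frac1{4\pi^2}$ for all $\tau$; (ii) $\tau\mapsto\int_0^1\sigma(\tau,s)\,ds$ is monotone increasing, and $\int_0^1\sigma(\tau,s)\,ds\le\int_0^1|\xi(\tau,s)|^2ds$ for all $\tau$; (iii) the limits as $\tau\to\infty$ of $\int_0^1\sigma(\tau,s)\,ds$ and of $\int_0^1|\xi(\tau,s)|^2ds$ exist and coincide.
   Context: $\mathbb S^1=\mathbb R/\mathbb Z$, $d\ge2$. The normalized flow: $\xi:[0,\infty)\times\mathbb S^1\to\mathbb R^d$ and $\sigma:[0,\infty)\times\mathbb S^1\to\mathbb R$ with $|\partial_s\xi(\tau,s)|=1$ and $\int_0^1\xi(\tau,s)\,ds=0$ for all $(\tau,s)$, satisfying $$\partial_\tau\xi=\partial_s(\sigma\partial_s\xi)+\xi,\qquad \partial_{ss}\sigma-\sigma|\partial_{ss}\xi|^2=-1,\ \ \sigma(\tau,\cdot)\ \text{periodic on } \mathbb S^1.$$ *)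

theory Defs
  imports "HOL-Analysis.Analysis"
begin

text \<open>Defined coinductively,
  i.e. derivatives of all orders exist.\<close>

coinductive Cinf_on :: "(real \<times> real) set \<Rightarrow> (real \<times> real \<Rightarrow> 'b::real_normed_vector) \<Rightarrow> bool"
  for S where
  Cinf_onI: "\<lbrakk> \<forall>z\<in>S. (f has_derivative (\<lambda>(h, k). h *\<^sub>R ft z + k *\<^sub>R fs z)) (at z within S);
              Cinf_on S ft; Cinf_on S fs \<rbrakk> \<Longrightarrow> Cinf_on S f"

definition dS :: "(real \<Rightarrow> real \<Rightarrow> 'b::real_normed_vector) \<Rightarrow> real \<Rightarrow> real \<Rightarrow> 'b" where
  "dS f \<tau> s = vector_derivative (\<lambda>r. f \<tau> r) (at s)"

end

theory Submission
  imports Defs "HOL-Library.Periodic_Fun"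
begin

(*
  Write A = \<integral>|\<xi>|\<^sup>2 and B = \<integral>\<sigma> (over one period), T = \<partial>\<^sub>s\<xi>, K = \<partial>\<^sub>sT, and
  W = \<partial>\<^sub>s(\<sigma>T) + \<xi> = \<partial>\<^sub>\<tau>\<xi> for the velocity. Integrating by parts, \<integral>\<langle>\<xi>, \<partial>\<^sub>s(\<sigma>T)\<rangle> = -B, so
  A' = 2\<integral>\<langle>\<xi>, W\<rangle> = 2(A - B). The tension equation says \<langle>T, \<partial>\<^sub>sW\<rangle> = 0, which makes W orthogonal
  to \<partial>\<^sub>s(\<sigma>T) in L\<^sup>2; hence A - B = \<integral>|W|\<^sup>2 \<ge> 0. Wirtinger's inequality and |T| = 1 give
  A \<le> 1/4\<pi>\<^sup>2.

  Subtracting the tension equations at two times gives B(h) - B(t) = \<integral>\<sigma>(t)\<sigma>(h)(|K(t)|\<^sup>2 - |K(h)|\<^sup>2),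
  and differentiating at h = t, B' = -2\<integral>\<sigma>\<^sup>2\<langle>K, \<partial>\<^sub>s\<^sub>sW\<rangle> = 2\<integral>\<langle>\<partial>\<^sub>s(\<sigma>\<^sup>2K), \<partial>\<^sub>sW\<rangle>.
  With F = \<partial>\<^sub>s\<^sub>s(\<sigma>T) one has \<partial>\<^sub>s(\<sigma>\<^sup>2K) = \<sigma>(F - (\<partial>\<^sub>s\<^sub>s\<sigma>)T), \<partial>\<^sub>sW = F + T and \<langle>T, F\<rangle> = -1, so
  the integrand is \<sigma>(|F|\<^sup>2 - 1) \<ge> 0; here \<sigma> > 0 because at a minimum of \<sigma> the tension equation
  forces \<sigma>|K|\<^sup>2 \<ge> 1.

  So A and B increase and are bounded, and a gap between their limits would make A grow linearly.
*)

section \<open>Periodic and monotone functions of one variable\<close>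

lemma at_within_Ici_nontrivial:
  fixes a t :: real
  assumes "a \<le> t"
  shows "at t within {a..} \<noteq> bot"
proof -
  have "at t within {t..t+1} \<le> at t within {a..}"
    using assms by (intro at_le) auto
  moreover have "at t within {t..t+1} \<noteq> bot"
    by (simp add: at_within_Icc_at_right)
  ultimately show ?thesis
    by (metis bot.extremum_unique)
qed

lemma at_within_Ici_eq_at: "t > 0 \<Longrightarrow> at t within {0::real..} = at t"
  by (rule at_within_interior) (simp add: interior_Ici[of "-1"])

lemma has_vector_derivative_inner:
  assumes "(f has_vector_derivative f') (at x within S)" "(g has_vector_derivative g') (at x within S)"
  shows "((\<lambda>x. inner (f x) (g x)) has_vector_derivative (inner (f x) g' + inner f' (g x))) (at x within S)"
  by (rule bounded_bilinear.has_vector_derivative[OF bounded_bilinear_inner assms])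

lemma integrable_on_continuous_UNIV:
  fixes f :: "real \<Rightarrow> 'b::banach"
  shows "continuous_on UNIV f \<Longrightarrow> f integrable_on {a..b}"
  by (rule integrable_continuous_interval, rule continuous_on_subset, assumption, simp)

lemma has_integral_norm_sq:
  fixes f :: "real \<Rightarrow> 'b::euclidean_space"
  assumes "continuous_on UNIV f"
  shows "((\<lambda>s. (norm (f s))\<^sup>2) has_integral integral {0..1} (\<lambda>s. (norm (f s))\<^sup>2)) {0..1}"
  by (intro integrable_integral integrable_on_continuous_UNIV continuous_intros assms)

lemma periodic_derivative:
  assumes d: "\<And>s. (f has_vector_derivative f' s) (at s)" and p: "\<And>s. f (s + 1) = f s"
  shows "f' (s + 1) = f' s"
proof -
  have "((\<lambda>r. r + 1) has_vector_derivative 1) (at s)"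
    by (auto intro!: derivative_eq_intros)
  from vector_diff_chain_at[OF this d[of "s + 1"]]
  have "(f has_vector_derivative f' (s + 1)) (at s)" using p by (simp add: o_def)
  then show ?thesis using d vector_derivative_unique_at by blast
qed

lemma periodic_attains_min:
  fixes f :: "real \<Rightarrow> real"
  assumes "continuous_on UNIV f" and "\<And>s. f (s + 1) = f s"
  obtains m where "\<And>s. f m \<le> f s"
proof -
  interpret periodic_fun_simple' f by standard (fact assms(2))
  obtain m where m: "\<forall>y\<in>{0..1}. f m \<le> f y"
    using continuous_attains_inf[of "{0..1}" f] continuous_on_subset[OF assms(1)] by auto
  have "f m \<le> f s" for s
  proof -
    have "s - of_int \<lfloor>s\<rfloor> \<in> {0..1}" by (auto, linarith)
    with m have "f m \<le> f (s - of_int \<lfloor>s\<rfloor> + of_int \<lfloor>s\<rfloor>)" by (simp only: plus_of_int)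
    then show ?thesis by simp
  qed
  then show ?thesis using that by blast
qed

lemma integral_periodic_derivative:
  fixes g :: "real \<Rightarrow> 'b::banach"
  assumes "\<And>s. (g has_vector_derivative g' s) (at s)" "g 1 = g 0"
  shows "(g' has_integral 0) {0..1}"
  using fundamental_theorem_of_calculus[of 0 1 g g'] assms has_vector_derivative_at_within by fastforce

lemma global_min_second_derivative_nonneg:
  fixes f :: "real \<Rightarrow> real"
  assumes df: "\<And>s. (f has_real_derivative f' s) (at s)"
    and df': "\<And>s. (f' has_real_derivative f'' s) (at s)"
    and min: "\<And>s. f m \<le> f s"
  shows "f'' m \<ge> 0"
proof (rule ccontr)
  assume "\<not> f'' m \<ge> 0"
  then obtain d where d: "d > 0" and dec: "\<And>h. 0 < h \<Longrightarrow> h < d \<Longrightarrow> f' (m + h) < f' m"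
    using DERIV_neg_dec_right[OF df'[of m]] by auto
  have "f' m = 0"
    using DERIV_local_min[OF df[of m], of 1] min by auto
  obtain z where z: "m < z" "z < m + d/2" and eq: "f (m + d/2) - f m = (m + d/2 - m) * f' z"
    using MVT2[of m "m + d/2" f f'] df d by auto
  have "f' z < 0" using dec[of "z - m"] z \<open>f' m = 0\<close> by auto
  then have "f (m + d/2) < f m" using eq d mult_pos_neg[of d "f' z"] by simp
  with min show False by (meson not_le)
qed

lemma mono_on_Ici_if_derivative_nonneg:
  fixes f f' :: "real \<Rightarrow> real"
  assumes d: "\<And>t. t \<ge> 0 \<Longrightarrow> (f has_real_derivative f' t) (at t within {0..})"
    and nonneg: "\<And>t. t > 0 \<Longrightarrow> f' t \<ge> 0"
  shows "mono_on {0..} f"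
proof (rule mono_onI)
  fix a b :: real assume ab: "a \<in> {0..}" "b \<in> {0..}" "a \<le> b"
  have "continuous_on {0..} f"
    using d by (auto simp: continuous_on_eq_continuous_within intro: DERIV_continuous)
  then have "continuous_on {a..b} f"
    using ab by (auto intro: continuous_on_subset)
  moreover have "\<exists>y. (f has_real_derivative y) (at x) \<and> 0 \<le> y" if "a < x" "x < b" for x
    using d[of x] nonneg[of x] at_within_Ici_eq_at[of x] ab that by auto
  ultimately show "f a \<le> f b"
    using DERIV_nonneg_imp_increasing_open[OF ab(3)] by blast
qed

lemma tendsto_Sup_if_mono_on_bounded:
  fixes f :: "real \<Rightarrow> real"
  assumes m: "mono_on {0..} f" and b: "\<And>t. t \<ge> 0 \<Longrightarrow> f t \<le> M"
  shows "(f \<longlongrightarrow> (SUP t\<in>{0..}. f t)) at_top"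
proof -
  have bdd: "bdd_above (f ` {0..})" using b by (intro bdd_aboveI2[of _ _ M]) auto
  show ?thesis
  proof (rule order_tendstoI)
    fix y assume "y < (SUP t\<in>{0..}. f t)"
    then obtain t0 where t0: "t0 \<ge> 0" "y < f t0" using less_cSUP_iff[OF _ bdd] by auto
    have "y < f t" if "t \<ge> t0" for t
      using mono_onD[OF m, of t0 t] t0 that by auto
    then show "\<forall>\<^sub>F t in at_top. y < f t"
      unfolding eventually_at_top_linorder by blast
  next
    fix y assume "y > (SUP t\<in>{0..}. f t)"
    then have "f t < y" if "t \<ge> 0" for t
      using cSUP_upper[OF _ bdd, of t] that by auto
    then show "\<forall>\<^sub>F t in at_top. f t < y"
      unfolding eventually_at_top_linorder by blast
  qed
qed

lemma exceeds_if_derivative_ge: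
  fixes A A' :: "real \<Rightarrow> real"
  assumes dA: "\<And>t. t \<ge> t0 \<Longrightarrow> (A has_real_derivative A' t) (at t)"
    and ge: "\<And>t. t \<ge> t0 \<Longrightarrow> A' t \<ge> d" and d: "d > 0"
  obtains t where "t \<ge> t0" "A t > M"
proof -
  define n where "n = \<bar>M - A t0\<bar> / d + 1"
  have n: "n > 0" using d by (simp add: n_def add_nonneg_pos)
  obtain z where z: "t0 < z" "z < t0 + n" and mvt: "A (t0 + n) - A t0 = n * A' z"
    using MVT2[of t0 "t0 + n" A A'] dA n by force
  have "n * d \<le> n * A' z"
    using ge[of z] z n by (intro mult_left_mono) auto
  moreover have "n * d > \<bar>M - A t0\<bar>"
    using d by (simp add: n_def field_simps)
  ultimately have "A (t0 + n) > M"
    using mvt by linarith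
  with n show ?thesis using that[of "t0 + n"] by simp
qed

lemma common_limit_if_derivative_gap:
  fixes A B :: "real \<Rightarrow> real"
  assumes mA: "mono_on {0..} A" and mB: "mono_on {0..} B"
    and BA: "\<And>t. t \<ge> 0 \<Longrightarrow> B t \<le> A t" and AM: "\<And>t. t \<ge> 0 \<Longrightarrow> A t \<le> M"
    and dA: "\<And>t. t > 0 \<Longrightarrow> (A has_real_derivative 2 * (A t - B t)) (at t)"
  shows "\<exists>L. (B \<longlongrightarrow> L) at_top \<and> (A \<longlongrightarrow> L) at_top"
proof -
  define La where "La = (SUP t\<in>{0..}. A t)"
  define Lb where "Lb = (SUP t\<in>{0..}. B t)"
  have BM: "B t \<le> M" if "t \<ge> 0" for t using BA[OF that] AM[OF that] by linarith
  have tA: "(A \<longlongrightarrow> La) at_top" unfolding La_def by (rule tendsto_Sup_if_mono_on_bounded[OF mA AM])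
  have tB: "(B \<longlongrightarrow> Lb) at_top" unfolding Lb_def by (rule tendsto_Sup_if_mono_on_bounded[OF mB BM])
  have B_le: "B t \<le> Lb" if "t \<ge> 0" for t
    unfolding Lb_def using BM that by (intro cSUP_upper bdd_aboveI2[of _ _ M]) auto
  have "Lb \<le> La"
    by (rule tendsto_le[OF _ tA tB]) (auto simp: eventually_at_top_linorder intro!: exI[of _ 0] BA)
  moreover have "\<not> Lb < La"
  proof
    assume "Lb < La"
    \<comment> \<open>a positive gap between the limits would make \<open>A\<close> grow linearly\<close>
    then have "(La + Lb) / 2 < La" by simp
    then obtain t1 where t1: "\<And>t. t \<ge> t1 \<Longrightarrow> (La + Lb) / 2 < A t"
      using tA unfolding order_tendsto_iff eventually_at_top_linorder by blast
    define t0 where "t0 = max t1 1"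
    have "2 * (A t - B t) \<ge> La - Lb" if "t \<ge> t0" for t
      using t1[of t] B_le[of t] that by (simp add: t0_def)
    moreover have "(A has_real_derivative 2 * (A t - B t)) (at t)" if "t \<ge> t0" for t
      using dA that by (simp add: t0_def)
    ultimately obtain t where "t \<ge> t0" "A t > M"
      using exceeds_if_derivative_ge[of t0 A "\<lambda>t. 2 * (A t - B t)" "La - Lb" M] \<open>Lb < La\<close> by auto
    with AM[of t] show False by (simp add: t0_def)
  qed
  ultimately have "La = Lb" by linarith
  then show ?thesis using tA tB by auto
qed

section \<open>Wirtinger's inequality\<close>

lemma has_real_derivative_tan_weighted_square:
  assumes cz: "cos (c * (s - m)) \<noteq> 0" and dg: "(g has_real_derivative g') (at s)"
  shows "((\<lambda>s. - c * tan (c * (s - m)) * (g s)\<^sup>2) has_real_derivative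
    - c\<^sup>2 * (1 + (tan (c * (s - m)))\<^sup>2) * (g s)\<^sup>2 - c * tan (c * (s - m)) * (2 * g s * g')) (at s)"
proof -
  have du: "((\<lambda>s. c * (s - m)) has_real_derivative c) (at s)"
    by (auto intro!: derivative_eq_intros)
  have d: "((\<lambda>s. - c * tan (c * (s - m)) * (g s)\<^sup>2) has_real_derivative
      (- c * (inverse ((cos (c * (s - m)))\<^sup>2) * c)) * (g s)\<^sup>2 + (- c * tan (c * (s - m))) * (2 * g s * g'))
      (at s)"
    using cz by (auto intro!: derivative_eq_intros DERIV_chain2[OF DERIV_tan[OF cz] du] dg simp: power2_eq_square)
  have "inverse ((cos (c * (s - m)))\<^sup>2) = 1 + (tan (c * (s - m)))\<^sup>2"
    using tan_sec[OF cz] by (simp add: power_inverse)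
  then have "(- c * (inverse ((cos (c * (s - m)))\<^sup>2) * c)) * (g s)\<^sup>2 + (- c * tan (c * (s - m))) * (2 * g s * g')
      = - c\<^sup>2 * (1 + (tan (c * (s - m)))\<^sup>2) * (g s)\<^sup>2 - c * tan (c * (s - m)) * (2 * g s * g')"
    by (simp add: power2_eq_square)
  with d show ?thesis by (simp only:)
qed

lemma half_interval_wirtinger_below:
  fixes g g' :: "real \<Rightarrow> real"
  assumes dg: "\<And>s. (g has_real_derivative g' s) (at s)"
    and cg': "continuous_on UNIV g'"
    and g0: "g a = 0" and g1: "g (a + 1/2) = 0"
    and c: "0 < c" "c < 2 * pi"
  shows "c\<^sup>2 * integral {a..a+1/2} (\<lambda>s. (g s)\<^sup>2) \<le> integral {a..a+1/2} (\<lambda>s. (g' s)\<^sup>2)"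
proof -
  define m where "m = a + 1/4"
  \<comment> \<open>\<open>\<phi>\<close> solves the Riccati equation \<open>\<phi>' = - c\<^sup>2 - \<phi>\<^sup>2\<close>, so \<open>(\<phi> g\<^sup>2)'\<close> completes the square below\<close>
  define \<phi> where "\<phi> s = - c * tan (c * (s - m))" for s
  define h' where "h' s = - c\<^sup>2 * (1 + (tan (c * (s - m)))\<^sup>2) * (g s)\<^sup>2 - c * tan (c * (s - m)) * (2 * g s * g' s)"
    for s
  have cg: "continuous_on UNIV g"
    using dg by (auto intro!: continuous_at_imp_continuous_on DERIV_isCont)
  have cos_pos: "cos (c * (s - m)) > 0" if "s \<in> {a..a+1/2}" for s
  proof -
    have "\<bar>s - m\<bar> \<le> 1/4" using that unfolding atLeastAtMost_iff m_def by linarith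
    then have "\<bar>c * (s - m)\<bar> \<le> c * (1/4)"
      using c by (simp add: abs_mult mult_left_mono)
    also have "\<dots> < pi / 2" using c by simp
    finally show ?thesis by (intro cos_gt_zero_pi) auto
  qed
  have dh: "((\<lambda>s. \<phi> s * (g s)\<^sup>2) has_real_derivative h' s) (at s)" if "s \<in> {a..a+1/2}" for s
    unfolding \<phi>_def h'_def
    by (rule has_real_derivative_tan_weighted_square[OF _ dg]) (use cos_pos[OF that] in simp)
  have "(h' has_integral (\<phi> (a+1/2) * (g (a+1/2))\<^sup>2 - \<phi> a * (g a)\<^sup>2)) {a..a+1/2}"
    by (rule fundamental_theorem_of_calculus)
      (auto intro!: DERIV_subset[OF dh] simp: has_real_derivative_iff_has_vector_derivative[symmetric])
  then have int_h': "(h' has_integral 0) {a..a+1/2}" using g0 g1 by simp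
  define I where "I = integral {a..a+1/2} (\<lambda>s. (g s)\<^sup>2)"
  define J where "J = integral {a..a+1/2} (\<lambda>s. (g' s)\<^sup>2)"
  have iI: "((\<lambda>s. (g s)\<^sup>2) has_integral I) {a..a+1/2}"
    unfolding I_def by (intro integrable_integral integrable_on_continuous_UNIV continuous_intros cg)
  have iJ: "((\<lambda>s. (g' s)\<^sup>2) has_integral J) {a..a+1/2}"
    unfolding J_def by (intro integrable_integral integrable_on_continuous_UNIV continuous_intros cg')
  have "((\<lambda>s. (g' s)\<^sup>2 - h' s - c\<^sup>2 * (g s)\<^sup>2) has_integral (J - 0 - c\<^sup>2 * I)) {a..a+1/2}"
    by (intro has_integral_diff iJ int_h' has_integral_mult_right iI)
  moreover have "(g' s)\<^sup>2 - h' s - c\<^sup>2 * (g s)\<^sup>2 = (g' s - \<phi> s * g s)\<^sup>2" for s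
    unfolding h'_def \<phi>_def by (simp add: power2_eq_square algebra_simps)
  ultimately have "((\<lambda>s. (g' s - \<phi> s * g s)\<^sup>2) has_integral (J - c\<^sup>2 * I)) {a..a+1/2}"
    by simp
  then have "0 \<le> J - c\<^sup>2 * I" by (rule has_integral_nonneg) simp
  then show ?thesis unfolding I_def J_def by simp
qed

lemma half_interval_wirtinger:
  fixes g g' :: "real \<Rightarrow> real"
  assumes "\<And>s. (g has_real_derivative g' s) (at s)" "continuous_on UNIV g'"
    and "g a = 0" "g (a + 1/2) = 0"
  shows "(2 * pi)\<^sup>2 * integral {a..a+1/2} (\<lambda>s. (g s)\<^sup>2) \<le> integral {a..a+1/2} (\<lambda>s. (g' s)\<^sup>2)"
proof (rule tendsto_le[OF _ tendsto_const])
  show "((\<lambda>c. c\<^sup>2 * integral {a..a+1/2} (\<lambda>s. (g s)\<^sup>2)) \<longlongrightarrow>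
      (2 * pi)\<^sup>2 * integral {a..a+1/2} (\<lambda>s. (g s)\<^sup>2)) (at_left (2 * pi))"
    by (intro tendsto_intros)
  show "\<forall>\<^sub>F c in at_left (2 * pi).
      c\<^sup>2 * integral {a..a+1/2} (\<lambda>s. (g s)\<^sup>2) \<le> integral {a..a+1/2} (\<lambda>s. (g' s)\<^sup>2)"
    unfolding eventually_at_left[of 0 "2 * pi", OF pi_gt_zero[THEN mult_pos_pos[OF zero_less_numeral]]]
    using half_interval_wirtinger_below[OF assms] by (intro exI[of _ 0]) auto
qed simp

lemma integral_unit_interval_fold:
  fixes h :: "real \<Rightarrow> real"
  assumes ch: "continuous_on UNIV h"
  shows "integral {0..1} h = integral {0..1/2} (\<lambda>s. h s + h (s + 1/2))"
proof -
  have "integral {0..1/2} h + integral {1/2..1} h = integral {0..1} h"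
    by (intro Henstock_Kurzweil_Integration.integral_combine integrable_on_continuous_UNIV ch) auto
  moreover have "integral {0..1/2} (\<lambda>x. h (x + 1/2)) = integral {0 + 1/2..1/2 + 1/2} h"
    by (rule integral_shift[unfolded o_def]) (rule continuous_on_subset[OF ch], simp)
  moreover have "integral {0..1/2} (\<lambda>s. h s + h (s + 1/2))
      = integral {0..1/2} h + integral {0..1/2} (\<lambda>x. h (x + 1/2))"
    by (intro Henstock_Kurzweil_Integration.integral_add integrable_on_continuous_UNIV ch continuous_intros
        continuous_on_compose2[OF ch]) auto
  ultimately show ?thesis by simp
qed

lemma integral_shift_period:
  fixes h :: "real \<Rightarrow> real"
  assumes ch: "continuous_on UNIV h" and ph: "\<And>s. h (s + P) = h s" and a: "0 \<le> a" "a \<le> P"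
  shows "integral {a..a+P} h = integral {0..P} h"
proof -
  have "integral {a..P} h + integral {P..a+P} h = integral {a..a+P} h"
    using a by (intro Henstock_Kurzweil_Integration.integral_combine integrable_on_continuous_UNIV ch) auto
  moreover have "integral {0..a} (h \<circ> (\<lambda>x. x + P)) = integral {0 + P..a + P} h"
    by (rule integral_shift) (rule continuous_on_subset[OF ch], simp)
  moreover have "h \<circ> (\<lambda>x. x + P) = h" using ph by (auto simp: o_def)
  moreover have "integral {0..a} h + integral {a..P} h = integral {0..P} h"
    using a by (intro Henstock_Kurzweil_Integration.integral_combine integrable_on_continuous_UNIV ch) auto
  ultimately show ?thesis by simp
qed

lemma exists_zero_if_integral_zero:
  fixes p :: "real \<Rightarrow> real"
  assumes cp: "continuous_on UNIV p" and m: "integral {a..b} p = 0" and ab: "a < b"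
  obtains z where "z \<in> {a..b}" "p z = 0"
proof -
  define G where "G u = integral {a..u} p" for u
  have dG: "(G has_vector_derivative p x) (at x within {a..b})" if "x \<in> {a..b}" for x
    unfolding G_def[abs_def]
    by (rule integral_has_vector_derivative[OF continuous_on_subset[OF cp]]) (use that in auto)
  have cG: "continuous_on {a..b} G"
    using has_vector_derivative_continuous[OF dG] by (auto simp: continuous_on_eq_continuous_within)
  have dG': "(G has_derivative (\<lambda>v. v * p x)) (at x)" if "a < x" "x < b" for x
    using dG[of x] that at_within_interior[of x "{a..b}"]
    by (auto simp: has_vector_derivative_def mult.commute)
  obtain z where "a < z" "z < b" "(\<lambda>v. v * p z) = (\<lambda>v. 0)"
    using Rolle_deriv[of a b G "\<lambda>x v. v * p x", OF ab _ cG dG'] m by (auto simp: G_def)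
  then show ?thesis using that[of z] by (metis atLeastAtMost_iff less_imp_le mult_1)
qed

lemma exists_zero_if_antiperiodic:
  fixes q :: "real \<Rightarrow> real"
  assumes cq: "continuous_on UNIV q" and pq: "q (1/2) = - q 0"
  obtains z where "z \<in> {0..1/2}" "q z = 0"
proof -
  have "\<exists>x. 0 \<le> x \<and> x \<le> 1/2 \<and> q x = 0"
  proof (cases "q 0 \<le> 0")
    case True
    then show ?thesis by (intro IVT'[of q]) (auto simp: pq intro: continuous_on_subset[OF cq])
  next
    case False
    then show ?thesis by (intro IVT2'[of q]) (auto simp: pq intro: continuous_on_subset[OF cq])
  qed
  then show ?thesis using that by auto
qed

lemma half_periodic_wirtinger:
  fixes g g' :: "real \<Rightarrow> real"
  assumes dg: "\<And>s. (g has_real_derivative g' s) (at s)" and cg': "continuous_on UNIV g'"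
    and pg: "\<And>s. (g (s + 1/2))\<^sup>2 = (g s)\<^sup>2" and pg': "\<And>s. (g' (s + 1/2))\<^sup>2 = (g' s)\<^sup>2"
    and a: "a \<in> {0..1/2}" "g a = 0" "g (a + 1/2) = 0"
  shows "(2 * pi)\<^sup>2 * integral {0..1/2} (\<lambda>s. (g s)\<^sup>2) \<le> integral {0..1/2} (\<lambda>s. (g' s)\<^sup>2)"
proof -
  have cg: "continuous_on UNIV g"
    using dg by (auto intro!: continuous_at_imp_continuous_on DERIV_isCont)
  have "integral {a..a+1/2} (\<lambda>s. (g s)\<^sup>2) = integral {0..1/2} (\<lambda>s. (g s)\<^sup>2)"
    by (rule integral_shift_period) (use a pg in \<open>auto intro!: continuous_intros cg\<close>)
  moreover have "integral {a..a+1/2} (\<lambda>s. (g' s)\<^sup>2) = integral {0..1/2} (\<lambda>s. (g' s)\<^sup>2)"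
    by (rule integral_shift_period) (use a pg' in \<open>auto intro!: continuous_intros cg'\<close>)
  ultimately show ?thesis
    using half_interval_wirtinger[OF dg cg' a(2,3)] by simp
qed

definition half_shift_even :: "(real \<Rightarrow> real) \<Rightarrow> real \<Rightarrow> real" where
  "half_shift_even f s = (f s + f (s + 1/2)) / 2"

definition half_shift_odd :: "(real \<Rightarrow> real) \<Rightarrow> real \<Rightarrow> real" where
  "half_shift_odd f s = (f s - f (s + 1/2)) / 2"

lemma has_real_derivative_half_shift:
  assumes df: "\<And>s. (f has_real_derivative f' s) (at s)"
  shows "(half_shift_even f has_real_derivative half_shift_even f' s) (at s)"
    and "(half_shift_odd f has_real_derivative half_shift_odd f' s) (at s)"
proof -
  have "((\<lambda>s. f (s + 1/2)) has_real_derivative f' (s + 1/2)) (at s)"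
    using df[of "s + 1/2"] DERIV_shift by blast
  then show "(half_shift_even f has_real_derivative half_shift_even f' s) (at s)"
    and "(half_shift_odd f has_real_derivative half_shift_odd f' s) (at s)"
    unfolding half_shift_even_def[abs_def] half_shift_odd_def[abs_def]
    by (auto intro!: derivative_eq_intros df)
qed

lemma continuous_on_half_shift:
  assumes "continuous_on UNIV f"
  shows "continuous_on UNIV (half_shift_even f)" and "continuous_on UNIV (half_shift_odd f)"
proof -
  have "continuous_on UNIV (\<lambda>s. f (s + 1/2))"
    by (rule continuous_on_compose2[OF assms]) (auto intro!: continuous_intros)
  then show "continuous_on UNIV (half_shift_even f)" and "continuous_on UNIV (half_shift_odd f)"
    unfolding half_shift_even_def[abs_def] half_shift_odd_def[abs_def]
    by (auto intro!: continuous_intros assms)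
qed

lemma half_shift_periodic:
  assumes "\<And>s. f (s + 1) = f s"
  shows "half_shift_even f (s + 1/2) = half_shift_even f s"
    and "half_shift_odd f (s + 1/2) = - half_shift_odd f s"
proof -
  have "f (s + 1/2 + 1/2) = f s" using assms[of s] by (simp add: ac_simps)
  then show "half_shift_even f (s + 1/2) = half_shift_even f s"
    and "half_shift_odd f (s + 1/2) = - half_shift_odd f s"
    by (simp_all add: half_shift_even_def half_shift_odd_def field_simps)
qed

lemma integral_half_shift_even:
  assumes "continuous_on UNIV f"
  shows "integral {0..1} f = 2 * integral {0..1/2} (half_shift_even f)"
  unfolding integral_unit_interval_fold[OF assms] half_shift_even_def by simp

lemma integral_square_half_shift:
  fixes h :: "real \<Rightarrow> real"
  assumes ch: "continuous_on UNIV h"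
  shows "integral {0..1} (\<lambda>s. (h s)\<^sup>2)
    = 2 * integral {0..1/2} (\<lambda>s. (half_shift_even h s)\<^sup>2) + 2 * integral {0..1/2} (\<lambda>s. (half_shift_odd h s)\<^sup>2)"
proof -
  have "integral {0..1} (\<lambda>s. (h s)\<^sup>2) = integral {0..1/2} (\<lambda>s. (h s)\<^sup>2 + (h (s + 1/2))\<^sup>2)"
    by (rule integral_unit_interval_fold) (intro continuous_intros ch)
  also have "\<dots> = integral {0..1/2} (\<lambda>s. 2 * (half_shift_even h s)\<^sup>2 + 2 * (half_shift_odd h s)\<^sup>2)"
    by (intro Henstock_Kurzweil_Integration.integral_cong)
      (simp add: half_shift_even_def half_shift_odd_def power2_eq_square divide_simps, simp add: algebra_simps)
  also have "\<dots> = 2 * integral {0..1/2} (\<lambda>s. (half_shift_even h s)\<^sup>2)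
      + 2 * integral {0..1/2} (\<lambda>s. (half_shift_odd h s)\<^sup>2)"
    by (subst Henstock_Kurzweil_Integration.integral_add)
      (auto intro!: integrable_on_continuous_UNIV continuous_intros continuous_on_half_shift ch)
  finally show ?thesis .
qed

text \<open>The even part of \<open>f\<close> (with respect to the half-period shift) has mean zero, the odd part
  changes sign; either way each part vanishes at both ends of some interval of length 1/2, where the
  sharp Dirichlet estimate applies.\<close>

lemma wirtinger:
  fixes f f' :: "real \<Rightarrow> real"
  assumes df: "\<And>s. (f has_real_derivative f' s) (at s)"
    and cf': "continuous_on UNIV f'"
    and pf: "\<And>s. f (s + 1) = f s"
    and mean: "integral {0..1} f = 0"
  shows "4 * pi\<^sup>2 * integral {0..1} (\<lambda>s. (f s)\<^sup>2) \<le> integral {0..1} (\<lambda>s. (f' s)\<^sup>2)"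
proof -
  have cf: "continuous_on UNIV f"
    using df by (auto intro!: continuous_at_imp_continuous_on DERIV_isCont)
  have pf': "f' (s + 1) = f' s" for s
    using periodic_derivative[OF df[unfolded has_real_derivative_iff_has_vector_derivative] pf] .
  note parts = half_shift_periodic[of f, OF pf] half_shift_periodic[of f', OF pf']
  have "integral {0..1/2} (half_shift_even f) = 0"
    using integral_half_shift_even[OF cf] mean by simp
  then obtain b where b: "b \<in> {0..1/2}" "half_shift_even f b = 0"
    by (rule exists_zero_if_integral_zero[OF continuous_on_half_shift(1)[OF cf]]) simp
  obtain a where a: "a \<in> {0..1/2}" "half_shift_odd f a = 0"
    using exists_zero_if_antiperiodic[OF continuous_on_half_shift(2)[OF cf]] parts(2)[of 0] by auto
  have "(2 * pi)\<^sup>2 * integral {0..1/2} (\<lambda>s. (half_shift_even f s)\<^sup>2)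
      \<le> integral {0..1/2} (\<lambda>s. (half_shift_even f' s)\<^sup>2)"
    by (rule half_periodic_wirtinger[OF has_real_derivative_half_shift(1)[OF df]
          continuous_on_half_shift(1)[OF cf']]) (use b parts in auto)
  moreover have "(2 * pi)\<^sup>2 * integral {0..1/2} (\<lambda>s. (half_shift_odd f s)\<^sup>2)
      \<le> integral {0..1/2} (\<lambda>s. (half_shift_odd f' s)\<^sup>2)"
    by (rule half_periodic_wirtinger[OF has_real_derivative_half_shift(2)[OF df]
          continuous_on_half_shift(2)[OF cf']]) (use a parts in auto)
  ultimately show ?thesis
    unfolding integral_square_half_shift[OF cf] integral_square_half_shift[OF cf']
    by (simp add: power_mult_distrib algebra_simps)
qed

lemma integral_norm_sq_eq_sum_Basis:
  fixes f :: "real \<Rightarrow> 'a::euclidean_space"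
  assumes "continuous_on UNIV f"
  shows "integral {0..1} (\<lambda>s. (norm (f s))\<^sup>2) = (\<Sum>b\<in>Basis. integral {0..1} (\<lambda>s. (inner (f s) b)\<^sup>2))"
proof -
  have "(norm v)\<^sup>2 = (\<Sum>b\<in>Basis. (inner v b)\<^sup>2)" for v :: 'a
    unfolding power2_norm_eq_inner by (subst euclidean_inner) (simp only: power2_eq_square)
  then show ?thesis
    by (simp only:) (rule integral_sum, auto intro!: integrable_on_continuous_UNIV continuous_intros assms)
qed

lemma wirtinger_euclidean:
  fixes x x' :: "real \<Rightarrow> 'a::euclidean_space"
  assumes dx: "\<And>s. (x has_vector_derivative x' s) (at s)" and cx': "continuous_on UNIV x'"
    and px: "\<And>s. x (s + 1) = x s" and mean: "integral {0..1} x = 0"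
  shows "4 * pi\<^sup>2 * integral {0..1} (\<lambda>s. (norm (x s))\<^sup>2) \<le> integral {0..1} (\<lambda>s. (norm (x' s))\<^sup>2)"
proof -
  have cx: "continuous_on UNIV x"
    using dx by (auto intro!: continuous_at_imp_continuous_on has_vector_derivative_continuous)
  have "4 * pi\<^sup>2 * integral {0..1} (\<lambda>s. (inner (x s) b)\<^sup>2) \<le> integral {0..1} (\<lambda>s. (inner (x' s) b)\<^sup>2)"
    for b
  proof (rule wirtinger)
    show "((\<lambda>s. inner (x s) b) has_real_derivative inner (x' s) b) (at s)" for s
      using has_vector_derivative_inner[OF dx[of s] has_vector_derivative_const[of b]]
      by (simp add: has_real_derivative_iff_has_vector_derivative)
    show "continuous_on UNIV (\<lambda>s. inner (x' s) b)" by (intro continuous_intros cx')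
    show "inner (x (s + 1)) b = inner (x s) b" for s by (simp add: px)
    have "((\<lambda>v. inner v b) \<circ> x has_integral inner (integral {0..1} x) b) {0..1}"
      by (intro has_integral_linear[OF _ bounded_linear_inner_left] integrable_integral
          integrable_on_continuous_UNIV cx)
    then show "integral {0..1} (\<lambda>s. inner (x s) b) = 0" using mean by (simp add: o_def integral_unique)
  qed
  then show ?thesis
    unfolding integral_norm_sq_eq_sum_Basis[OF cx] integral_norm_sq_eq_sum_Basis[OF cx'] sum_distrib_left
    by (intro sum_mono)
qed

section \<open>Closed curves under tension\<close>

text \<open>Integrate the derivative of the periodic Wronskian \<open>\<sigma>\<^sub>b \<sigma>\<^sub>a' - \<sigma>\<^sub>b' \<sigma>\<^sub>a\<close>.\<close>

lemma integral_tension_difference: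
  fixes \<sigma>\<^sub>a \<sigma>\<^sub>a' \<sigma>\<^sub>a'' \<sigma>\<^sub>b \<sigma>\<^sub>b' \<sigma>\<^sub>b'' \<kappa>\<^sub>a \<kappa>\<^sub>b :: "real \<Rightarrow> real"
  assumes da: "\<And>s. (\<sigma>\<^sub>a has_real_derivative \<sigma>\<^sub>a' s) (at s)" "\<And>s. (\<sigma>\<^sub>a' has_real_derivative \<sigma>\<^sub>a'' s) (at s)"
    and db: "\<And>s. (\<sigma>\<^sub>b has_real_derivative \<sigma>\<^sub>b' s) (at s)" "\<And>s. (\<sigma>\<^sub>b' has_real_derivative \<sigma>\<^sub>b'' s) (at s)"
    and pa: "\<And>s. \<sigma>\<^sub>a (s + 1) = \<sigma>\<^sub>a s" and pb: "\<And>s. \<sigma>\<^sub>b (s + 1) = \<sigma>\<^sub>b s"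
    and ta: "\<And>s. \<sigma>\<^sub>a'' s - \<sigma>\<^sub>a s * \<kappa>\<^sub>a s = -1" and tb: "\<And>s. \<sigma>\<^sub>b'' s - \<sigma>\<^sub>b s * \<kappa>\<^sub>b s = -1"
    and c: "continuous_on UNIV \<kappa>\<^sub>a" "continuous_on UNIV \<kappa>\<^sub>b"
  shows "integral {0..1} \<sigma>\<^sub>b - integral {0..1} \<sigma>\<^sub>a = integral {0..1} (\<lambda>s. \<sigma>\<^sub>a s * \<sigma>\<^sub>b s * (\<kappa>\<^sub>a s - \<kappa>\<^sub>b s))"
proof -
  have ca: "continuous_on UNIV \<sigma>\<^sub>a" and cb: "continuous_on UNIV \<sigma>\<^sub>b"
    using da(1) db(1) by (auto intro!: continuous_at_imp_continuous_on DERIV_isCont)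
  have pa': "\<sigma>\<^sub>a' (s + 1) = \<sigma>\<^sub>a' s" and pb': "\<sigma>\<^sub>b' (s + 1) = \<sigma>\<^sub>b' s" for s
    using periodic_derivative[of \<sigma>\<^sub>a \<sigma>\<^sub>a', OF _ pa] periodic_derivative[of \<sigma>\<^sub>b \<sigma>\<^sub>b', OF _ pb] da(1) db(1)
    by (auto simp: has_real_derivative_iff_has_vector_derivative)
  have "((\<lambda>s. \<sigma>\<^sub>b s * \<sigma>\<^sub>a' s - \<sigma>\<^sub>b' s * \<sigma>\<^sub>a s) has_real_derivative
      \<sigma>\<^sub>a s * \<sigma>\<^sub>b s * (\<kappa>\<^sub>a s - \<kappa>\<^sub>b s) - \<sigma>\<^sub>b s + \<sigma>\<^sub>a s) (at s)" for s
  proof -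
    have "((\<lambda>s. \<sigma>\<^sub>b s * \<sigma>\<^sub>a' s - \<sigma>\<^sub>b' s * \<sigma>\<^sub>a s) has_real_derivative
        \<sigma>\<^sub>b' s * \<sigma>\<^sub>a' s + \<sigma>\<^sub>b s * \<sigma>\<^sub>a'' s - (\<sigma>\<^sub>b'' s * \<sigma>\<^sub>a s + \<sigma>\<^sub>b' s * \<sigma>\<^sub>a' s)) (at s)"
      by (auto intro!: derivative_eq_intros da db)
    moreover have "\<sigma>\<^sub>a'' s = \<sigma>\<^sub>a s * \<kappa>\<^sub>a s - 1" "\<sigma>\<^sub>b'' s = \<sigma>\<^sub>b s * \<kappa>\<^sub>b s - 1"
      using ta[of s] tb[of s] by simp_all
    ultimately show ?thesis by (simp add: algebra_simps)
  qed
  then have "((\<lambda>s. \<sigma>\<^sub>a s * \<sigma>\<^sub>b s * (\<kappa>\<^sub>a s - \<kappa>\<^sub>b s) - \<sigma>\<^sub>b s + \<sigma>\<^sub>a s) has_integral 0) {0..1}"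
    using pa[of 0] pb[of 0] pa'[of 0] pb'[of 0]
    by (intro integral_periodic_derivative[where g="\<lambda>s. \<sigma>\<^sub>b s * \<sigma>\<^sub>a' s - \<sigma>\<^sub>b' s * \<sigma>\<^sub>a s"])
      (auto simp: has_real_derivative_iff_has_vector_derivative)
  moreover have "integral {0..1} (\<lambda>s. \<sigma>\<^sub>a s * \<sigma>\<^sub>b s * (\<kappa>\<^sub>a s - \<kappa>\<^sub>b s) - \<sigma>\<^sub>b s + \<sigma>\<^sub>a s)
      = integral {0..1} (\<lambda>s. \<sigma>\<^sub>a s * \<sigma>\<^sub>b s * (\<kappa>\<^sub>a s - \<kappa>\<^sub>b s)) - integral {0..1} \<sigma>\<^sub>b + integral {0..1} \<sigma>\<^sub>a"
    by (subst integral_add integral_diff; auto intro!: integrable_on_continuous_UNIV continuous_intros ca cb c)+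
  ultimately show ?thesis by (simp add: integral_unique)
qed

locale curve_with_tension =
  fixes x T K K' :: "real \<Rightarrow> 'a::euclidean_space" and \<sigma> \<sigma>' \<sigma>'' :: "real \<Rightarrow> real"
  assumes deriv_x: "\<And>s. (x has_vector_derivative T s) (at s)"
    and deriv_T: "\<And>s. (T has_vector_derivative K s) (at s)"
    and deriv_K: "\<And>s. (K has_vector_derivative K' s) (at s)"
    and continuous_K': "continuous_on UNIV K'"
    and deriv_\<sigma>: "\<And>s. (\<sigma> has_real_derivative \<sigma>' s) (at s)"
    and deriv_\<sigma>': "\<And>s. (\<sigma>' has_real_derivative \<sigma>'' s) (at s)"
    and continuous_\<sigma>'': "continuous_on UNIV \<sigma>''"
    and x_periodic: "\<And>s. x (s + 1) = x s"
    and \<sigma>_periodic: "\<And>s. \<sigma> (s + 1) = \<sigma> s"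
    and norm_T: "\<And>s. norm (T s) = 1"
    and tension: "\<And>s. \<sigma>'' s - \<sigma> s * (norm (K s))\<^sup>2 = -1"
begin

lemma deriv_\<sigma>_vector: "(\<sigma> has_vector_derivative \<sigma>' s) (at s)"
  and deriv_\<sigma>'_vector: "(\<sigma>' has_vector_derivative \<sigma>'' s) (at s)"
  using deriv_\<sigma> deriv_\<sigma>' has_real_derivative_iff_has_vector_derivative by blast+

lemma T_periodic: "T (s + 1) = T s"
  and K_periodic: "K (s + 1) = K s"
  and K'_periodic: "K' (s + 1) = K' s"
  and \<sigma>'_periodic: "\<sigma>' (s + 1) = \<sigma>' s"
  and \<sigma>''_periodic: "\<sigma>'' (s + 1) = \<sigma>'' s"
  using periodic_derivative[OF deriv_x x_periodic] periodic_derivative[OF deriv_T] periodic_derivative[OF deriv_K]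
    periodic_derivative[OF deriv_\<sigma>_vector \<sigma>_periodic] periodic_derivative[OF deriv_\<sigma>'_vector]
  by blast+

lemma continuous_x: "continuous_on UNIV x"
  and continuous_T: "continuous_on UNIV T"
  and continuous_K: "continuous_on UNIV K"
  and continuous_\<sigma>: "continuous_on UNIV \<sigma>"
  and continuous_\<sigma>': "continuous_on UNIV \<sigma>'"
  using deriv_x deriv_T deriv_K deriv_\<sigma>_vector deriv_\<sigma>'_vector
  by (auto intro!: continuous_at_imp_continuous_on has_vector_derivative_continuous)

lemma inner_T_T: "inner (T s) (T s) = 1"
  using norm_T[of s] by (simp add: norm_eq_sqrt_inner)

lemma inner_T_K: "inner (T s) (K s) = 0"
proof -
  have "((\<lambda>s. inner (T s) (T s)) has_vector_derivative (inner (T s) (K s) + inner (K s) (T s))) (at s)"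
    by (rule has_vector_derivative_inner[OF deriv_T deriv_T])
  moreover have "((\<lambda>s. inner (T s) (T s)) has_vector_derivative 0) (at s)"
    using inner_T_T by simp
  ultimately show ?thesis
    using vector_derivative_unique_at by (fastforce simp: inner_commute)
qed

lemma inner_T_K': "inner (T s) (K' s) = - (norm (K s))\<^sup>2"
proof -
  have "((\<lambda>s. inner (T s) (K s)) has_vector_derivative (inner (T s) (K' s) + inner (K s) (K s))) (at s)"
    by (rule has_vector_derivative_inner[OF deriv_T deriv_K])
  moreover have "((\<lambda>s. inner (T s) (K s)) has_vector_derivative 0) (at s)"
    using inner_T_K by simp
  ultimately show ?thesis
    using vector_derivative_unique_at by (fastforce simp: power2_norm_eq_inner)
qed

text \<open>For the flow, \<open>force = \<partial>\<^sub>s(\<sigma> \<partial>\<^sub>s\<xi>)\<close> and \<open>velocity = \<partial>\<^sub>\<tau>\<xi>\<close>.\<close>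

definition "force s = \<sigma>' s *\<^sub>R T s + \<sigma> s *\<^sub>R K s"
definition "force' s = \<sigma>'' s *\<^sub>R T s + (2 * \<sigma>' s) *\<^sub>R K s + \<sigma> s *\<^sub>R K' s"
definition "velocity s = force s + x s"

lemma has_vector_derivative_\<sigma>T: "((\<lambda>s. \<sigma> s *\<^sub>R T s) has_vector_derivative force s) (at s)"
  unfolding force_def using has_vector_derivative_scaleR[OF deriv_\<sigma> deriv_T] by (simp add: add.commute)

lemma has_vector_derivative_force: "(force has_vector_derivative force' s) (at s)"
proof -
  have "(force has_vector_derivative
      (\<sigma>' s *\<^sub>R K s + \<sigma>'' s *\<^sub>R T s + (\<sigma> s *\<^sub>R K' s + \<sigma>' s *\<^sub>R K s))) (at s)"
    unfolding force_def[abs_def]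
    by (intro has_vector_derivative_add has_vector_derivative_scaleR deriv_\<sigma> deriv_\<sigma>' deriv_T deriv_K)
  moreover have "\<sigma>' s *\<^sub>R K s + \<sigma>'' s *\<^sub>R T s + (\<sigma> s *\<^sub>R K' s + \<sigma>' s *\<^sub>R K s) = force' s"
    unfolding force'_def by (simp add: scaleR_left_distrib[symmetric] algebra_simps)
  ultimately show ?thesis by simp
qed

lemma has_vector_derivative_velocity: "(velocity has_vector_derivative (force' s + T s)) (at s)"
  unfolding velocity_def[abs_def] by (intro has_vector_derivative_add has_vector_derivative_force deriv_x)

lemma inner_T_force': "inner (T s) (force' s) = -1"
  using inner_T_T[of s] inner_T_K[of s] inner_T_K'[of s] tension[of s]
  by (simp add: force'_def inner_add_right algebra_simps)

lemma force_periodic: "force (s + 1) = force s"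
  by (simp add: force_def T_periodic K_periodic \<sigma>_periodic \<sigma>'_periodic)

lemma force'_periodic: "force' (s + 1) = force' s"
  by (simp add: force'_def T_periodic K_periodic K'_periodic \<sigma>_periodic \<sigma>'_periodic \<sigma>''_periodic)

lemma velocity_periodic: "velocity (s + 1) = velocity s"
  by (simp add: velocity_def force_periodic x_periodic)

lemma continuous_force': "continuous_on UNIV force'"
  unfolding force'_def[abs_def]
  by (intro continuous_intros continuous_\<sigma>'' continuous_T continuous_\<sigma>' continuous_K continuous_\<sigma> continuous_K')

lemma continuous_velocity: "continuous_on UNIV velocity"
  using has_vector_derivative_velocity
  by (auto intro!: continuous_at_imp_continuous_on has_vector_derivative_continuous)

lemma has_integral_inner_x_force: "((\<lambda>s. inner (x s) (force s)) has_integral - integral {0..1} \<sigma>) {0..1}"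
proof -
  have "((\<lambda>s. inner (x s) (\<sigma> s *\<^sub>R T s)) has_vector_derivative (inner (x s) (force s) + \<sigma> s)) (at s)" for s
    using has_vector_derivative_inner[OF deriv_x has_vector_derivative_\<sigma>T, of s] inner_T_T[of s]
    by (simp add: inner_commute)
  then have "((\<lambda>s. inner (x s) (force s) + \<sigma> s) has_integral 0) {0..1}"
    by (rule integral_periodic_derivative) (metis add_0 x_periodic \<sigma>_periodic T_periodic)
  from has_integral_diff[OF this integrable_integral[OF integrable_on_continuous_UNIV[OF continuous_\<sigma>]]]
  show ?thesis by simp
qed

text \<open>This is where the tension equation enters, in the form \<open>\<langle>T, velocity'\<rangle> = 0\<close>.\<close>

lemma has_integral_inner_force_velocity: "((\<lambda>s. inner (force s) (velocity s)) has_integral 0) {0..1}"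
proof -
  have "((\<lambda>s. inner (\<sigma> s *\<^sub>R T s) (velocity s)) has_vector_derivative inner (force s) (velocity s)) (at s)" for s
    using has_vector_derivative_inner[OF has_vector_derivative_\<sigma>T has_vector_derivative_velocity, of s]
      inner_T_force'[of s] inner_T_T[of s]
    by (simp add: inner_commute inner_add_right)
  then show ?thesis
    by (rule integral_periodic_derivative) (metis add_0 \<sigma>_periodic T_periodic velocity_periodic)
qed

lemma integral_inner_x_velocity:
  "integral {0..1} (\<lambda>s. inner (x s) (velocity s))
    = integral {0..1} (\<lambda>s. (norm (x s))\<^sup>2) - integral {0..1} \<sigma>"
  using has_integral_add[OF has_integral_inner_x_force has_integral_norm_sq[OF continuous_x]]
  by (intro integral_unique) (simp add: velocity_def inner_add_right power2_norm_eq_inner)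

lemma integral_inner_x_velocity_nonneg: "integral {0..1} (\<lambda>s. inner (x s) (velocity s)) \<ge> 0"
proof -
  note i = has_integral_norm_sq[OF continuous_velocity]
  from has_integral_diff[OF i has_integral_inner_force_velocity]
  have "((\<lambda>s. inner (x s) (velocity s)) has_integral integral {0..1} (\<lambda>s. (norm (velocity s))\<^sup>2)) {0..1}"
    by (simp add: velocity_def inner_add_left power2_norm_eq_inner inner_commute algebra_simps)
  moreover have "integral {0..1} (\<lambda>s. (norm (velocity s))\<^sup>2) \<ge> 0"
    using i by (intro integral_nonneg) auto
  ultimately show ?thesis by (simp add: integral_unique)
qed

lemma integral_tension_le: "integral {0..1} \<sigma> \<le> integral {0..1} (\<lambda>s. (norm (x s))\<^sup>2)"
  using integral_inner_x_velocity integral_inner_x_velocity_nonneg by linarith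

lemma tension_pos: "\<sigma> s > 0"
proof -
  obtain m where min: "\<And>s. \<sigma> m \<le> \<sigma> s"
    using periodic_attains_min[OF continuous_\<sigma> \<sigma>_periodic] by blast
  have "\<sigma> m * (norm (K m))\<^sup>2 \<ge> 1"
    using tension[of m] global_min_second_derivative_nonneg[OF deriv_\<sigma> deriv_\<sigma>' min] by linarith
  then have "\<sigma> m > 0"
    by (metis not_le mult_nonpos_nonneg zero_le_power2 zero_less_one order.strict_trans2)
  with min show ?thesis by (meson less_le_trans)
qed

lemma inner_deriv_\<sigma>2K_velocity'_nonneg:
  "inner ((2 * \<sigma> s * \<sigma>' s) *\<^sub>R K s + (\<sigma> s)\<^sup>2 *\<^sub>R K' s) (force' s + T s) \<ge> 0"
proof -
  have eq: "(2 * \<sigma> s * \<sigma>' s) *\<^sub>R K s + (\<sigma> s)\<^sup>2 *\<^sub>R K' s = \<sigma> s *\<^sub>R (force' s - \<sigma>'' s *\<^sub>R T s)"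
    by (simp add: force'_def algebra_simps power2_eq_square)
  have "1 \<le> \<bar>inner (T s) (force' s)\<bar>" using inner_T_force'[of s] by simp
  also have "\<dots> \<le> norm (force' s)"
    using Cauchy_Schwarz_ineq2[of "T s" "force' s"] norm_T[of s] by simp
  finally have "(norm (force' s))\<^sup>2 \<ge> 1" by (simp add: one_le_power)
  moreover have "inner (force' s - \<sigma>'' s *\<^sub>R T s) (force' s + T s) = (norm (force' s))\<^sup>2 - 1"
    using inner_T_force'[of s] inner_T_T[of s] inner_commute[of "force' s" "T s"]
    by (simp add: inner_diff_left inner_add_right power2_norm_eq_inner)
  ultimately show ?thesis using eq tension_pos[of s] by simp
qed

text \<open>Integrating by parts, \<open>\<integral> \<langle>\<sigma>\<^sup>2 K, velocity''\<rangle> = - \<integral> \<langle>(\<sigma>\<^sup>2 K)', velocity'\<rangle> \<le> 0\<close>.\<close>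

lemma integral_inner_\<sigma>2K_velocity''_nonpos:
  assumes dV: "\<And>s. ((\<lambda>s. force' s + T s) has_vector_derivative V'' s) (at s)"
    and cV'': "continuous_on UNIV V''"
  shows "integral {0..1} (\<lambda>s. inner ((\<sigma> s)\<^sup>2 *\<^sub>R K s) (V'' s)) \<le> 0"
proof -
  define Q where "Q s = inner ((2 * \<sigma> s * \<sigma>' s) *\<^sub>R K s + (\<sigma> s)\<^sup>2 *\<^sub>R K' s) (force' s + T s)" for s
  have "((\<lambda>s. (\<sigma> s)\<^sup>2 *\<^sub>R K s) has_vector_derivative (2 * \<sigma> s * \<sigma>' s) *\<^sub>R K s + (\<sigma> s)\<^sup>2 *\<^sub>R K' s) (at s)" for s
  proof -
    have "((\<lambda>s. (\<sigma> s)\<^sup>2) has_real_derivative 2 * \<sigma> s * \<sigma>' s) (at s)"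
      by (auto intro!: derivative_eq_intros deriv_\<sigma>)
    from has_vector_derivative_scaleR[OF this deriv_K[of s]] show ?thesis by (simp add: add.commute)
  qed
  from has_vector_derivative_inner[OF this dV]
  have "((\<lambda>s. inner ((\<sigma> s)\<^sup>2 *\<^sub>R K s) (force' s + T s)) has_vector_derivative
      inner ((\<sigma> s)\<^sup>2 *\<^sub>R K s) (V'' s) + Q s) (at s)" for s
    unfolding Q_def .
  then have z: "((\<lambda>s. inner ((\<sigma> s)\<^sup>2 *\<^sub>R K s) (V'' s) + Q s) has_integral 0) {0..1}"
    by (rule integral_periodic_derivative)
      (use \<sigma>_periodic[of 0] K_periodic[of 0] force'_periodic[of 0] T_periodic[of 0] in simp)
  have iQ: "(Q has_integral integral {0..1} Q) {0..1}"
    unfolding Q_def[abs_def]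
    by (intro integrable_integral integrable_on_continuous_UNIV continuous_intros continuous_\<sigma>
        continuous_\<sigma>' continuous_K continuous_K' continuous_force' continuous_T)
  from has_integral_diff[OF z iQ]
  have "((\<lambda>s. inner ((\<sigma> s)\<^sup>2 *\<^sub>R K s) (V'' s)) has_integral - integral {0..1} Q) {0..1}"
    by simp
  moreover have "integral {0..1} Q \<ge> 0"
    using iQ inner_deriv_\<sigma>2K_velocity'_nonneg unfolding Q_def by (intro integral_nonneg) auto
  ultimately show ?thesis by (simp add: integral_unique)
qed

lemma integral_norm_sq_le:
  assumes "integral {0..1} x = 0"
  shows "integral {0..1} (\<lambda>s. (norm (x s))\<^sup>2) \<le> 1 / (4 * pi\<^sup>2)"
  using wirtinger_euclidean[OF deriv_x continuous_T x_periodic assms]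
  by (simp add: norm_T pos_le_divide_eq mult.commute)

end

section \<open>Smooth functions on the half-plane\<close>

definition dT :: "(real \<Rightarrow> real \<Rightarrow> 'b::real_normed_vector) \<Rightarrow> real \<Rightarrow> real \<Rightarrow> 'b" where
  "dT f \<tau> s = vector_derivative (\<lambda>t. f t s) (at \<tau> within {0..})"

abbreviation half_plane :: "(real \<times> real) set" where
  "half_plane \<equiv> {0..} \<times> UNIV"

lemma Cinf_on_cong:
  assumes "Cinf_on S f" and "\<And>z. z \<in> S \<Longrightarrow> f z = g z"
  shows "Cinf_on S g"
proof -
  have "\<exists>f. Cinf_on S f \<and> (\<forall>z\<in>S. f z = g z)" using assms by blast
  then show ?thesis
  proof (coinduction arbitrary: g rule: Cinf_on.coinduct)
    case (Cinf_on g)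
    then obtain f where f: "Cinf_on S f" "\<forall>z\<in>S. f z = g z" by blast
    then obtain ft fs where d: "\<forall>z\<in>S. (f has_derivative (\<lambda>(h, k). h *\<^sub>R ft z + k *\<^sub>R fs z)) (at z within S)"
      and "Cinf_on S ft" "Cinf_on S fs"
      by (cases rule: Cinf_on.cases) blast
    moreover have "\<forall>z\<in>S. (g has_derivative (\<lambda>(h, k). h *\<^sub>R ft z + k *\<^sub>R fs z)) (at z within S)"
    proof
      fix z assume "z \<in> S"
      then show "(g has_derivative (\<lambda>(h, k). h *\<^sub>R ft z + k *\<^sub>R fs z)) (at z within S)"
        using has_derivative_transform[of z S g f, OF _ _ d[rule_format]] f(2) by auto
    qed
    ultimately show ?case by blast
  qed
qed

lemma Cinf_on_continuous_on: "Cinf_on S f \<Longrightarrow> continuous_on S f"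
  by (cases rule: Cinf_on.cases)
    (auto simp: continuous_on_eq_continuous_within intro: has_derivative_continuous)

lemma has_derivative_half_plane_imp_s:
  assumes "(f has_derivative (\<lambda>(h, k). h *\<^sub>R a + k *\<^sub>R b)) (at (t, s) within half_plane)" "t \<ge> 0"
  shows "((\<lambda>r. f (t, r)) has_vector_derivative b) (at s)"
proof -
  have "((\<lambda>r. (t, r)) has_derivative (\<lambda>k. (0, k))) (at s)"
    by (auto intro!: derivative_eq_intros)
  moreover have "(f has_derivative (\<lambda>(h, k). h *\<^sub>R a + k *\<^sub>R b)) (at (t, s) within range (Pair t))"
    using assms by (auto intro: has_derivative_subset)
  ultimately show ?thesis
    by (auto dest: has_derivative_in_compose simp: has_vector_derivative_def)
qed

lemma has_derivative_half_plane_imp_t: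
  assumes "(f has_derivative (\<lambda>(h, k). h *\<^sub>R a + k *\<^sub>R b)) (at (t, s) within half_plane)" "t \<ge> 0"
  shows "((\<lambda>u. f (u, s)) has_vector_derivative a) (at t within {0..})"
proof -
  have "((\<lambda>u. (u, s)) has_derivative (\<lambda>h. (h, 0))) (at t within {0..})"
    by (auto intro!: derivative_eq_intros)
  moreover have "(f has_derivative (\<lambda>(h, k). h *\<^sub>R a + k *\<^sub>R b)) (at (t, s) within (\<lambda>u. (u, s)) ` {0..})"
    using assms by (auto intro: has_derivative_subset)
  ultimately show ?thesis
    by (auto dest: has_derivative_in_compose simp: has_vector_derivative_def)
qed

lemma Cinf_on_half_plane_partials:
  assumes "Cinf_on half_plane (\<lambda>(t, s). f t s)"
  obtains ft fs where
    "\<And>z. z \<in> half_plane \<Longrightarrow>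
      ((\<lambda>(t, s). f t s) has_derivative (\<lambda>(h, k). h *\<^sub>R ft z + k *\<^sub>R fs z)) (at z within half_plane)"
    "Cinf_on half_plane ft" "Cinf_on half_plane fs"
    "\<And>t s. t \<ge> 0 \<Longrightarrow> ft (t, s) = dT f t s" "\<And>t s. t \<ge> 0 \<Longrightarrow> fs (t, s) = dS f t s"
proof -
  obtain ft fs where d: "\<And>z. z \<in> half_plane \<Longrightarrow>
      ((\<lambda>(t, s). f t s) has_derivative (\<lambda>(h, k). h *\<^sub>R ft z + k *\<^sub>R fs z)) (at z within half_plane)"
    and "Cinf_on half_plane ft" "Cinf_on half_plane fs"
    using assms by (cases rule: Cinf_on.cases) blast
  moreover have "ft (t, s) = dT f t s" if "t \<ge> 0" for t s
    using vector_derivative_within[OF at_within_Ici_nontrivial[OF that]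
        has_derivative_half_plane_imp_t[OF d that]] that
    by (simp add: dT_def)
  moreover have "fs (t, s) = dS f t s" if "t \<ge> 0" for t s
    using vector_derivative_at[OF has_derivative_half_plane_imp_s[OF d that]] that
    by (simp add: dS_def)
  ultimately show ?thesis using that by blast
qed

lemma continuous_on_slice_of_product:
  assumes "continuous_on (A \<times> UNIV) (\<lambda>(t, s). g t s)" "t \<in> A"
  shows "continuous_on UNIV (g t)"
proof -
  have "continuous_on UNIV (\<lambda>r. (t, r))" by (intro continuous_intros)
  from continuous_on_compose2[OF assms(1) this] assms(2) show ?thesis by auto
qed

context
  fixes f :: "real \<Rightarrow> real \<Rightarrow> 'b::real_normed_vector"
  assumes smooth: "Cinf_on half_plane (\<lambda>(t, s). f t s)"
begin

lemma Cinf_on_dT: "Cinf_on half_plane (\<lambda>(t, s). dT f t s)"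
  and Cinf_on_dS: "Cinf_on half_plane (\<lambda>(t, s). dS f t s)"
  and has_vector_derivative_dT: "t \<ge> 0 \<Longrightarrow> ((\<lambda>u. f u s) has_vector_derivative dT f t s) (at t within {0..})"
  and has_vector_derivative_dS: "t \<ge> 0 \<Longrightarrow> ((\<lambda>r. f t r) has_vector_derivative dS f t s) (at s)"
proof -
  obtain ft fs where d: "\<And>z. z \<in> half_plane \<Longrightarrow>
      ((\<lambda>(t, s). f t s) has_derivative (\<lambda>(h, k). h *\<^sub>R ft z + k *\<^sub>R fs z)) (at z within half_plane)"
    and smooth_ft: "Cinf_on half_plane ft" and smooth_fs: "Cinf_on half_plane fs"
    and ft: "\<And>t s. t \<ge> 0 \<Longrightarrow> ft (t, s) = dT f t s" and fs: "\<And>t s. t \<ge> 0 \<Longrightarrow> fs (t, s) = dS f t s"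
    using Cinf_on_half_plane_partials[OF smooth] by blast
  show "Cinf_on half_plane (\<lambda>(t, s). dT f t s)"
    by (rule Cinf_on_cong[OF smooth_ft]) (auto simp: ft)
  show "Cinf_on half_plane (\<lambda>(t, s). dS f t s)"
    by (rule Cinf_on_cong[OF smooth_fs]) (auto simp: fs)
  show "((\<lambda>u. f u s) has_vector_derivative dT f t s) (at t within {0..})" if "t \<ge> 0"
    using has_derivative_half_plane_imp_t[OF d] that by (simp add: ft)
  show "((\<lambda>r. f t r) has_vector_derivative dS f t s) (at s)" if "t \<ge> 0"
    using has_derivative_half_plane_imp_s[OF d] that by (simp add: fs)
qed

lemma continuous_on_half_plane: "continuous_on half_plane (\<lambda>(t, s). f t s)"
  by (rule Cinf_on_continuous_on[OF smooth])

lemma continuous_on_half_plane_fst_snd: "continuous_on half_plane (\<lambda>z. f (fst z) (snd z))"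
  using continuous_on_half_plane by (simp add: case_prod_beta')

lemma continuous_on_slice: "t \<ge> 0 \<Longrightarrow> continuous_on UNIV (f t)"
  using continuous_on_slice_of_product[OF continuous_on_half_plane] by simp

lemma continuous_on_slice_snd: "t \<ge> 0 \<Longrightarrow> continuous_on S (\<lambda>z. f t (snd z))"
  by (rule continuous_on_compose2[OF continuous_on_slice]) (auto intro: continuous_intros)

end

lemma continuous_eq_if_integrals_eq:
  fixes g h :: "real \<Rightarrow> 'b::banach"
  assumes "continuous_on UNIV g" "continuous_on UNIV h"
    and "\<And>c d. c \<le> d \<Longrightarrow> integral {c..d} g = integral {c..d} h"
  shows "g s = h s"
proof -
  define D where "D r = g r - h r" for r
  have cD: "continuous_on UNIV D" unfolding D_def[abs_def] by (intro continuous_intros assms)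
  have zero: "integral {s - 1..u} D = 0" if "u \<in> {s - 1..s + 1}" for u
    using assms(3)[of "s - 1" u] that unfolding D_def
    by (subst integral_diff) (auto intro!: integrable_continuous_interval continuous_on_subset[OF assms(1)]
        continuous_on_subset[OF assms(2)])
  have "((\<lambda>u. integral {s - 1..u} D) has_vector_derivative D s) (at s within {s - 1..s + 1})"
    by (rule integral_has_vector_derivative) (auto intro: continuous_on_subset[OF cD])
  then have "((\<lambda>u. 0) has_vector_derivative D s) (at s within {s - 1..s + 1})"
    by (rule has_vector_derivative_transform[rotated 2]) (auto simp: zero)
  then have "D s = 0"
    using vector_derivative_unique_within_closed_interval[of "s - 1" "s + 1" s "\<lambda>u. 0::'b"] by auto
  then show ?thesis unfolding D_def by simp
qed

lemma has_vector_derivative_parametric_integral: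
  fixes f f' :: "real \<Rightarrow> real \<Rightarrow> 'b::banach"
  assumes "\<And>u s. u \<in> U \<Longrightarrow> ((\<lambda>u. f u s) has_vector_derivative f' u s) (at u within U)"
    and "\<And>u. u \<in> U \<Longrightarrow> continuous_on UNIV (f u)"
    and "continuous_on (U \<times> UNIV) (\<lambda>(u, s). f' u s)"
    and "t \<in> U" "convex U"
  shows "((\<lambda>u. integral {a..b} (f u)) has_vector_derivative integral {a..b} (f' t)) (at t within U)"
proof -
  have "((\<lambda>u. integral (cbox a b) (f u)) has_vector_derivative integral (cbox a b) (f' t)) (at t within U)"
    by (rule leibniz_rule_vector_derivative)
      (use assms in \<open>auto intro: integrable_on_continuous_UNIV continuous_on_subset\<close>)
  then show ?thesis by simp
qed

text \<open>Differentiating under the integral sign, both mixed partials have the same integral over every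
  interval in \<open>s\<close>.\<close>

lemma mixed_partials_commute:
  fixes f f\<^sub>t f\<^sub>s f\<^sub>t\<^sub>s f\<^sub>s\<^sub>t :: "real \<Rightarrow> real \<Rightarrow> 'b::banach"
  assumes f\<^sub>s: "\<And>t s. t > 0 \<Longrightarrow> ((\<lambda>r. f t r) has_vector_derivative f\<^sub>s t s) (at s)"
    and f\<^sub>t: "\<And>t s. t > 0 \<Longrightarrow> ((\<lambda>u. f u s) has_vector_derivative f\<^sub>t t s) (at t)"
    and f\<^sub>t\<^sub>s: "\<And>t s. t > 0 \<Longrightarrow> ((\<lambda>r. f\<^sub>t t r) has_vector_derivative f\<^sub>t\<^sub>s t s) (at s)"
    and f\<^sub>s\<^sub>t: "\<And>t s. t > 0 \<Longrightarrow> ((\<lambda>u. f\<^sub>s u s) has_vector_derivative f\<^sub>s\<^sub>t t s) (at t)"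
    and c_st: "continuous_on ({0<..} \<times> UNIV) (\<lambda>(t, s). f\<^sub>s\<^sub>t t s)"
    and c_ts: "continuous_on ({0<..} \<times> UNIV) (\<lambda>(t, s). f\<^sub>t\<^sub>s t s)"
    and t: "t > 0"
  shows "f\<^sub>t\<^sub>s t s = f\<^sub>s\<^sub>t t s"
proof (rule continuous_eq_if_integrals_eq)
  show "continuous_on UNIV (f\<^sub>t\<^sub>s t)" "continuous_on UNIV (f\<^sub>s\<^sub>t t)"
    using continuous_on_slice_of_product[OF c_ts] continuous_on_slice_of_product[OF c_st] t by auto
  fix c d :: real assume cd: "c \<le> d"
  have fi: "((\<lambda>r. f\<^sub>s u r) has_integral (f u d - f u c)) {c..d}" if "u > 0" for u
    by (rule fundamental_theorem_of_calculus[OF cd]) (auto intro: has_vector_derivative_at_within f\<^sub>s that)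
  have "((\<lambda>u. integral {c..d} (f\<^sub>s u)) has_vector_derivative integral {c..d} (f\<^sub>s\<^sub>t t)) (at t within {0<..})"
  proof (rule leibniz_rule_vector_derivative[where fx=f\<^sub>s\<^sub>t, where a=c and b=d, simplified])
    show "((\<lambda>u. f\<^sub>s u r) has_vector_derivative f\<^sub>s\<^sub>t u r) (at u within {0<..})" if "u \<in> {0<..}" for u r
      using f\<^sub>s\<^sub>t[of u r] that by (auto intro: has_vector_derivative_at_within)
    show "f\<^sub>s u integrable_on {c..d}" if "u \<in> {0<..}" for u
      using fi[of u] that by auto
    show "continuous_on ({0<..} \<times> {c..d}) (\<lambda>(u, r). f\<^sub>s\<^sub>t u r)"
      by (rule continuous_on_subset[OF c_st]) auto
  qed (use t in auto)
  then have "((\<lambda>u. integral {c..d} (f\<^sub>s u)) has_vector_derivative integral {c..d} (f\<^sub>s\<^sub>t t)) (at t)"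
    using at_within_open[of t "{0<..}"] t by simp
  then have "((\<lambda>u. f u d - f u c) has_vector_derivative integral {c..d} (f\<^sub>s\<^sub>t t)) (at t)"
    by (rule has_vector_derivative_transform_within_open[of _ _ _ "{0<..}"])
      (use t fi in \<open>auto intro: integral_unique\<close>)
  moreover have "((\<lambda>u. f u d - f u c) has_vector_derivative f\<^sub>t t d - f\<^sub>t t c) (at t)"
    by (intro has_vector_derivative_diff f\<^sub>t t)
  moreover have "((\<lambda>r. f\<^sub>t\<^sub>s t r) has_integral (f\<^sub>t t d - f\<^sub>t t c)) {c..d}"
    by (rule fundamental_theorem_of_calculus[OF cd]) (auto intro: has_vector_derivative_at_within f\<^sub>t\<^sub>s t)
  ultimately show "integral {c..d} (f\<^sub>t\<^sub>s t) = integral {c..d} (f\<^sub>s\<^sub>t t)"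
    using vector_derivative_unique_at by (metis integral_unique)
qed

lemma Cinf_on_dT_dS_commute:
  fixes f :: "real \<Rightarrow> real \<Rightarrow> 'b::banach"
  assumes smooth: "Cinf_on half_plane (\<lambda>(t, s). f t s)" and t: "t > 0"
  shows "dT (dS f) t s = dS (dT f) t s"
proof (rule mixed_partials_commute[symmetric, OF _ _ _ _ _ _ t])
  have at: "at u within {0..} = at u" if "u > 0" for u :: real
    using at_within_Ici_eq_at[OF that] .
  show "((\<lambda>r. f u r) has_vector_derivative dS f u s) (at s)" if "u > 0" for u s
    using has_vector_derivative_dS[OF smooth] that by simp
  show "((\<lambda>v. f v s) has_vector_derivative dT f u s) (at u)" if "u > 0" for u s
    using has_vector_derivative_dT[OF smooth, of u s] that by (simp add: at)
  show "((\<lambda>r. dT f u r) has_vector_derivative dS (dT f) u s) (at s)" if "u > 0" for u s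
    using has_vector_derivative_dS[OF Cinf_on_dT[OF smooth]] that by simp
  show "((\<lambda>v. dS f v s) has_vector_derivative dT (dS f) u s) (at u)" if "u > 0" for u s
    using has_vector_derivative_dT[OF Cinf_on_dS[OF smooth], of u s] that by (simp add: at)
  show "continuous_on ({0<..} \<times> UNIV) (\<lambda>(t, s). dT (dS f) t s)"
    by (rule continuous_on_subset[OF continuous_on_half_plane[OF Cinf_on_dT[OF Cinf_on_dS[OF smooth]]]]) auto
  show "continuous_on ({0<..} \<times> UNIV) (\<lambda>(t, s). dS (dT f) t s)"
    by (rule continuous_on_subset[OF continuous_on_half_plane[OF Cinf_on_dS[OF Cinf_on_dT[OF smooth]]]]) auto
qed

section \<open>The normalized flow\<close>

locale normalized_flow =
  fixes \<xi> :: "real \<Rightarrow> real \<Rightarrow> 'a::euclidean_space"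
    and \<sigma> :: "real \<Rightarrow> real \<Rightarrow> real"
  assumes smooth_xi: "Cinf_on ({0..} \<times> UNIV) (\<lambda>(\<tau>, s). \<xi> \<tau> s)"
    and smooth_sigma: "Cinf_on ({0..} \<times> UNIV) (\<lambda>(\<tau>, s). \<sigma> \<tau> s)"
    and per_xi: "\<And>\<tau> s. \<tau> \<ge> 0 \<Longrightarrow> \<xi> \<tau> (s + 1) = \<xi> \<tau> s"
    and per_sigma: "\<And>\<tau> s. \<tau> \<ge> 0 \<Longrightarrow> \<sigma> \<tau> (s + 1) = \<sigma> \<tau> s"
    and arclength: "\<And>\<tau> s. \<tau> \<ge> 0 \<Longrightarrow> norm (dS \<xi> \<tau> s) = 1"
    and centered: "\<And>\<tau>. \<tau> \<ge> 0 \<Longrightarrow> integral {0..1} (\<lambda>s. \<xi> \<tau> s) = 0"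
    and flow: "\<And>\<tau> s. \<tau> \<ge> 0 \<Longrightarrow>
      ((\<lambda>t. \<xi> t s) has_vector_derivative
         (dS (\<lambda>t r. \<sigma> t r *\<^sub>R dS \<xi> t r) \<tau> s + \<xi> \<tau> s)) (at \<tau> within {0..})"
    and tension: "\<And>\<tau> s. \<tau> \<ge> 0 \<Longrightarrow>
      dS (dS \<sigma>) \<tau> s - \<sigma> \<tau> s * (norm (dS (dS \<xi>) \<tau> s))\<^sup>2 = -1"
begin

lemma has_real_derivative_dS_sigma:
  "t \<ge> 0 \<Longrightarrow> ((\<lambda>r. \<sigma> t r) has_real_derivative dS \<sigma> t s) (at s)"
  "t \<ge> 0 \<Longrightarrow> ((\<lambda>r. dS \<sigma> t r) has_real_derivative dS (dS \<sigma>) t s) (at s)"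
  using has_vector_derivative_dS[OF smooth_sigma] has_vector_derivative_dS[OF Cinf_on_dS[OF smooth_sigma]]
  by (simp_all add: has_real_derivative_iff_has_vector_derivative)

lemma curve_with_tension_slice:
  assumes t: "t \<ge> 0"
  shows "curve_with_tension (\<xi> t) (dS \<xi> t) (dS (dS \<xi>) t) (dS (dS (dS \<xi>)) t)
    (\<sigma> t) (dS \<sigma> t) (dS (dS \<sigma>) t)"
proof
  show "(\<xi> t has_vector_derivative dS \<xi> t s) (at s)" for s
    using has_vector_derivative_dS[OF smooth_xi t] by simp
  show "(dS \<xi> t has_vector_derivative dS (dS \<xi>) t s) (at s)" for s
    using has_vector_derivative_dS[OF Cinf_on_dS[OF smooth_xi] t] by simp
  show "(dS (dS \<xi>) t has_vector_derivative dS (dS (dS \<xi>)) t s) (at s)" for s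
    using has_vector_derivative_dS[OF Cinf_on_dS[OF Cinf_on_dS[OF smooth_xi]] t] by simp
  show "continuous_on UNIV (dS (dS (dS \<xi>)) t)"
    by (rule continuous_on_slice[OF Cinf_on_dS[OF Cinf_on_dS[OF Cinf_on_dS[OF smooth_xi]]] t])
  show "(\<sigma> t has_real_derivative dS \<sigma> t s) (at s)" for s
    using has_real_derivative_dS_sigma(1)[OF t] by simp
  show "(dS \<sigma> t has_real_derivative dS (dS \<sigma>) t s) (at s)" for s
    using has_real_derivative_dS_sigma(2)[OF t] by simp
  show "continuous_on UNIV (dS (dS \<sigma>) t)"
    by (rule continuous_on_slice[OF Cinf_on_dS[OF Cinf_on_dS[OF smooth_sigma]] t])
qed (use t per_xi per_sigma arclength tension in auto)

lemma dT_xi: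
  assumes t: "t \<ge> 0"
  shows "dT \<xi> t s = dS \<sigma> t s *\<^sub>R dS \<xi> t s + \<sigma> t s *\<^sub>R dS (dS \<xi>) t s + \<xi> t s"
proof -
  have "((\<lambda>r. \<sigma> t r *\<^sub>R dS \<xi> t r) has_vector_derivative
      \<sigma> t s *\<^sub>R dS (dS \<xi>) t s + dS \<sigma> t s *\<^sub>R dS \<xi> t s) (at s)"
    by (rule has_vector_derivative_scaleR[OF has_real_derivative_dS_sigma(1)[OF t]
          has_vector_derivative_dS[OF Cinf_on_dS[OF smooth_xi] t]])
  then have "dS (\<lambda>t r. \<sigma> t r *\<^sub>R dS \<xi> t r) t s = dS \<sigma> t s *\<^sub>R dS \<xi> t s + \<sigma> t s *\<^sub>R dS (dS \<xi>) t s"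
    by (simp add: dS_def vector_derivative_at add.commute)
  then show ?thesis
    using vector_derivative_unique_within[OF at_within_Ici_nontrivial[OF t] flow[OF t, of s]
        has_vector_derivative_dT[OF smooth_xi t, of s]] by simp
qed

definition "second_moment \<tau> = integral {0..1} (\<lambda>s. (norm (\<xi> \<tau> s))\<^sup>2)"
definition "total_tension \<tau> = integral {0..1} (\<sigma> \<tau>)"

lemma total_tension_le_second_moment: "t \<ge> 0 \<Longrightarrow> total_tension t \<le> second_moment t"
  using curve_with_tension.integral_tension_le[OF curve_with_tension_slice]
  by (simp add: total_tension_def second_moment_def)

lemma second_moment_le: "t \<ge> 0 \<Longrightarrow> second_moment t \<le> 1 / (4 * pi\<^sup>2)"
  using curve_with_tension.integral_norm_sq_le[OF curve_with_tension_slice] centered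
  by (simp add: second_moment_def)

lemma has_derivative_second_moment:
  assumes t: "t \<ge> 0"
  shows "(second_moment has_real_derivative 2 * (second_moment t - total_tension t)) (at t within {0..})"
proof -
  interpret slice: curve_with_tension "\<xi> t" "dS \<xi> t" "dS (dS \<xi>) t" "dS (dS (dS \<xi>)) t"
      "\<sigma> t" "dS \<sigma> t" "dS (dS \<sigma>) t"
    by (rule curve_with_tension_slice[OF t])
  have "((\<lambda>u. integral {0..1} (\<lambda>s. (norm (\<xi> u s))\<^sup>2)) has_vector_derivative
      integral {0..1} (\<lambda>s. 2 * inner (\<xi> t s) (dT \<xi> t s))) (at t within {0..})"
  proof (rule has_vector_derivative_parametric_integral)
    show "((\<lambda>u. (norm (\<xi> u s))\<^sup>2) has_vector_derivative 2 * inner (\<xi> u s) (dT \<xi> u s)) (at u within {0..})"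
      if "u \<in> {0..}" for u s
      using has_vector_derivative_inner[OF has_vector_derivative_dT[OF smooth_xi, of u s]
          has_vector_derivative_dT[OF smooth_xi, of u s]] that
      by (simp add: power2_norm_eq_inner inner_commute)
    show "continuous_on UNIV (\<lambda>s. (norm (\<xi> u s))\<^sup>2)" if "u \<in> {0..}" for u
      using that by (intro continuous_intros continuous_on_slice[OF smooth_xi]) auto
    show "continuous_on ({0..} \<times> UNIV) (\<lambda>(u, s). 2 * inner (\<xi> u s) (dT \<xi> u s))"
      unfolding case_prod_beta'
      by (intro continuous_intros continuous_on_half_plane_fst_snd smooth_xi Cinf_on_dT)
  qed (use t in auto)
  moreover have "integral {0..1} (\<lambda>s. 2 * inner (\<xi> t s) (dT \<xi> t s)) = 2 * (second_moment t - total_tension t)"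
    using slice.integral_inner_x_velocity t
    by (simp add: dT_xi slice.velocity_def slice.force_def second_moment_def total_tension_def add.assoc)
  ultimately show ?thesis
    by (simp add: second_moment_def[abs_def] has_real_derivative_iff_has_vector_derivative)
qed

lemma second_moment_mono: "mono_on {0..} second_moment"
  using total_tension_le_second_moment
  by (intro mono_on_Ici_if_derivative_nonneg[OF has_derivative_second_moment]) auto

lemma has_derivative_total_tension:
  assumes t: "t \<ge> 0"
  shows "(total_tension has_real_derivative integral {0..1} (dT \<sigma> t)) (at t within {0..})"
proof -
  have "((\<lambda>u. integral {0..1} (\<sigma> u)) has_vector_derivative integral {0..1} (dT \<sigma> t)) (at t within {0..})"
    by (rule has_vector_derivative_parametric_integral)
      (use t has_vector_derivative_dT[OF smooth_sigma] continuous_on_slice[OF smooth_sigma]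
        continuous_on_half_plane[OF Cinf_on_dT[OF smooth_sigma]] in auto)
  then show ?thesis
    by (simp add: total_tension_def[abs_def] has_real_derivative_iff_has_vector_derivative)
qed

lemma total_tension_difference:
  assumes t: "t \<ge> 0" and h: "h \<ge> 0"
  shows "total_tension h - total_tension t
    = integral {0..1} (\<lambda>s. \<sigma> t s * \<sigma> h s * ((norm (dS (dS \<xi>) t s))\<^sup>2 - (norm (dS (dS \<xi>) h s))\<^sup>2))"
proof -
  have "continuous_on UNIV (\<lambda>s. (norm (dS (dS \<xi>) u s))\<^sup>2)" if "u \<ge> 0" for u
    by (intro continuous_intros continuous_on_slice[OF Cinf_on_dS[OF Cinf_on_dS[OF smooth_xi]] that])
  then show ?thesis
    unfolding total_tension_def using t h
    by (intro integral_tension_difference) (auto intro: has_real_derivative_dS_sigma per_sigma tension)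
qed

lemma has_vector_derivative_total_tension_difference:
  assumes t: "t > 0"
  shows "((\<lambda>u. integral {0..1}
      (\<lambda>s. \<sigma> t s * \<sigma> u s * ((norm (dS (dS \<xi>) t s))\<^sup>2 - (norm (dS (dS \<xi>) u s))\<^sup>2)))
    has_vector_derivative
      integral {0..1} (\<lambda>s. -2 * inner ((\<sigma> t s)\<^sup>2 *\<^sub>R dS (dS \<xi>) t s) (dT (dS (dS \<xi>)) t s))) (at t)"
proof -
  let ?K = "dS (dS \<xi>)"
  have smooth_K: "Cinf_on half_plane (\<lambda>(t, s). ?K t s)"
    by (intro Cinf_on_dS smooth_xi)
  define n where "n u s = (norm (?K u s))\<^sup>2" for u s
  define C' where "C' u s = \<sigma> t s * (dT \<sigma> u s * (n t s - n u s) - \<sigma> u s * (2 * inner (?K u s) (dT ?K u s)))"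
    for u s
  have "((\<lambda>u. integral {0..1} (\<lambda>s. \<sigma> t s * \<sigma> u s * (n t s - n u s))) has_vector_derivative
      integral {0..1} (C' t)) (at t within {0<..})"
  proof (rule has_vector_derivative_parametric_integral)
    fix u s :: real assume u: "u \<in> {0<..}"
    have "((\<lambda>u. n u s) has_real_derivative 2 * inner (?K u s) (dT ?K u s)) (at u within {0<..})"
      using has_vector_derivative_inner[OF has_vector_derivative_dT[OF smooth_K, of u s]
          has_vector_derivative_dT[OF smooth_K, of u s]] u
      by (auto simp: n_def power2_norm_eq_inner inner_commute has_real_derivative_iff_has_vector_derivative
          intro: has_vector_derivative_within_subset)
    moreover have "((\<lambda>u. \<sigma> u s) has_real_derivative dT \<sigma> u s) (at u within {0<..})"
      using has_vector_derivative_dT[OF smooth_sigma, of u s] u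
      by (auto simp: has_real_derivative_iff_has_vector_derivative intro: has_vector_derivative_within_subset)
    ultimately have "((\<lambda>u. \<sigma> t s * \<sigma> u s * (n t s - n u s)) has_real_derivative C' u s) (at u within {0<..})"
      unfolding C'_def by (auto intro!: derivative_eq_intros simp: algebra_simps)
    then show "((\<lambda>u. \<sigma> t s * \<sigma> u s * (n t s - n u s)) has_vector_derivative C' u s) (at u within {0<..})"
      by (simp add: has_real_derivative_iff_has_vector_derivative)
    show "continuous_on UNIV (\<lambda>s. \<sigma> t s * \<sigma> u s * (n t s - n u s))"
      unfolding n_def using t u
      by (intro continuous_intros continuous_on_slice[OF smooth_sigma] continuous_on_slice[OF smooth_K]) auto
  next
    have "continuous_on half_plane (\<lambda>(u, s). C' u s)"
      unfolding C'_def n_def case_prod_beta' using t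
      by (intro continuous_intros continuous_on_slice_snd[OF smooth_sigma] continuous_on_slice_snd[OF smooth_K]
          continuous_on_half_plane_fst_snd[OF smooth_sigma]
          continuous_on_half_plane_fst_snd[OF smooth_K]
          continuous_on_half_plane_fst_snd[OF Cinf_on_dT[OF smooth_sigma]]
          continuous_on_half_plane_fst_snd[OF Cinf_on_dT[OF smooth_K]]) simp_all
    then show "continuous_on ({0<..} \<times> UNIV) (\<lambda>(u, s). C' u s)"
      by (rule continuous_on_subset) auto
  qed (use t in auto)
  moreover have "integral {0..1} (C' t) = integral {0..1} (\<lambda>s. -2 * inner ((\<sigma> t s)\<^sup>2 *\<^sub>R ?K t s) (dT ?K t s))"
    by (intro Henstock_Kurzweil_Integration.integral_cong) (simp add: C'_def power2_eq_square)
  ultimately show ?thesis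
    using at_within_open[of t "{0<..}"] t by (simp add: n_def)
qed

lemma integral_dT_sigma:
  assumes t: "t > 0"
  shows "integral {0..1} (dT \<sigma> t)
    = -2 * integral {0..1} (\<lambda>s. inner ((\<sigma> t s)\<^sup>2 *\<^sub>R dS (dS \<xi>) t s) (dT (dS (dS \<xi>)) t s))"
proof -
  let ?D = "integral {0..1} (\<lambda>s. -2 * inner ((\<sigma> t s)\<^sup>2 *\<^sub>R dS (dS \<xi>) t s) (dT (dS (dS \<xi>)) t s))"
  have d: "((\<lambda>u. total_tension t + integral {0..1}
      (\<lambda>s. \<sigma> t s * \<sigma> u s * ((norm (dS (dS \<xi>) t s))\<^sup>2 - (norm (dS (dS \<xi>) u s))\<^sup>2)))
    has_vector_derivative ?D) (at t)"
    using has_vector_derivative_add[OF has_vector_derivative_const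
        has_vector_derivative_total_tension_difference[OF t]] by simp
  have eq: "total_tension t + integral {0..1}
      (\<lambda>s. \<sigma> t s * \<sigma> u s * ((norm (dS (dS \<xi>) t s))\<^sup>2 - (norm (dS (dS \<xi>) u s))\<^sup>2))
    = total_tension u" if "u \<in> {0<..}" for u
    using total_tension_difference[of t u] t that by simp
  from has_vector_derivative_transform_within_open[OF d open_greaterThan _ eq] t
  have "(total_tension has_vector_derivative ?D) (at t)" by simp
  moreover have "(total_tension has_vector_derivative integral {0..1} (dT \<sigma> t)) (at t)"
    using has_derivative_total_tension[of t] at_within_Ici_eq_at[OF t] t
    by (simp add: has_real_derivative_iff_has_vector_derivative)
  ultimately show ?thesis
    using vector_derivative_unique_at by fastforce
qed

lemma dT_dS_dS_eq_dS_dS_dT: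
  assumes t: "t > 0"
  shows "dT (dS (dS \<xi>)) t s = dS (dS (dT \<xi>)) t s"
proof -
  have "dT (dS \<xi>) t = dS (dT \<xi>) t"
    using Cinf_on_dT_dS_commute[OF smooth_xi t] by auto
  then show ?thesis
    using Cinf_on_dT_dS_commute[OF Cinf_on_dS[OF smooth_xi] t, of s]
    unfolding dS_def[of "dT (dS \<xi>)"] dS_def[of "dS (dT \<xi>)"] by simp
qed

lemma integral_dT_sigma_nonneg:
  assumes t: "t > 0"
  shows "integral {0..1} (dT \<sigma> t) \<ge> 0"
proof -
  have t0: "t \<ge> 0" using t by simp
  interpret slice: curve_with_tension "\<xi> t" "dS \<xi> t" "dS (dS \<xi>) t" "dS (dS (dS \<xi>)) t"
      "\<sigma> t" "dS \<sigma> t" "dS (dS \<sigma>) t"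
    by (rule curve_with_tension_slice[OF t0])
  have "dT \<xi> t = slice.velocity"
    by (auto simp: dT_xi[OF t0] slice.velocity_def slice.force_def)
  then have "dS (dT \<xi>) t s = slice.force' s + dS \<xi> t s" for s
    using has_vector_derivative_dS[OF Cinf_on_dT[OF smooth_xi] t0, of s]
      slice.has_vector_derivative_velocity[of s] vector_derivative_unique_at by auto
  then have "((\<lambda>s. slice.force' s + dS \<xi> t s) has_vector_derivative dS (dS (dT \<xi>)) t s) (at s)" for s
    using has_vector_derivative_dS[OF Cinf_on_dS[OF Cinf_on_dT[OF smooth_xi]] t0, of s] by simp
  from slice.integral_inner_\<sigma>2K_velocity''_nonpos[OF this
      continuous_on_slice[OF Cinf_on_dS[OF Cinf_on_dS[OF Cinf_on_dT[OF smooth_xi]]] t0]]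
  show ?thesis
    using integral_dT_sigma[OF t] dT_dS_dS_eq_dS_dS_dT[OF t] by simp
qed

lemma total_tension_mono: "mono_on {0..} total_tension"
  using integral_dT_sigma_nonneg
  by (intro mono_on_Ici_if_derivative_nonneg[OF has_derivative_total_tension]) auto

lemma total_tension_second_moment_common_limit: "\<exists>L. (total_tension \<longlongrightarrow> L) at_top \<and> (second_moment \<longlongrightarrow> L) at_top"
proof (rule common_limit_if_derivative_gap[OF second_moment_mono total_tension_mono
      total_tension_le_second_moment second_moment_le])
  fix t :: real assume "t > 0"
  then show "(second_moment has_real_derivative 2 * (second_moment t - total_tension t)) (at t)"
    using has_derivative_second_moment[of t] at_within_Ici_eq_at[of t] by simp
qed

end

theorem proposition3p1:
  fixes \<xi> :: "real \<Rightarrow> real \<Rightarrow> 'a::euclidean_space"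
    and \<sigma> :: "real \<Rightarrow> real \<Rightarrow> real"
  assumes dim: "DIM('a) \<ge> 2"
    and smooth_xi: "Cinf_on ({0..} \<times> UNIV) (\<lambda>(\<tau>, s). \<xi> \<tau> s)"
    and smooth_sigma: "Cinf_on ({0..} \<times> UNIV) (\<lambda>(\<tau>, s). \<sigma> \<tau> s)"
    and per_xi: "\<And>\<tau> s. \<tau> \<ge> 0 \<Longrightarrow> \<xi> \<tau> (s + 1) = \<xi> \<tau> s"
    and per_sigma: "\<And>\<tau> s. \<tau> \<ge> 0 \<Longrightarrow> \<sigma> \<tau> (s + 1) = \<sigma> \<tau> s"
    and arclength: "\<And>\<tau> s. \<tau> \<ge> 0 \<Longrightarrow> norm (dS \<xi> \<tau> s) = 1"
    and centered: "\<And>\<tau>. \<tau> \<ge> 0 \<Longrightarrow> integral {0..1} (\<lambda>s. \<xi> \<tau> s) = 0"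
    and flow: "\<And>\<tau> s. \<tau> \<ge> 0 \<Longrightarrow>
      ((\<lambda>t. \<xi> t s) has_vector_derivative
         (dS (\<lambda>t r. \<sigma> t r *\<^sub>R dS \<xi> t r) \<tau> s + \<xi> \<tau> s)) (at \<tau> within {0..})"
    and tension: "\<And>\<tau> s. \<tau> \<ge> 0 \<Longrightarrow>
      dS (dS \<sigma>) \<tau> s - \<sigma> \<tau> s * (norm (dS (dS \<xi>) \<tau> s))\<^sup>2 = -1"
  shows "mono_on {0..} (\<lambda>\<tau>. integral {0..1} (\<lambda>s. (norm (\<xi> \<tau> s))\<^sup>2))
       \<and> (\<forall>\<tau>\<ge>0. integral {0..1} (\<lambda>s. (norm (\<xi> \<tau> s))\<^sup>2) \<le> 1 / (4 * pi\<^sup>2))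
       \<and> mono_on {0..} (\<lambda>\<tau>. integral {0..1} (\<lambda>s. \<sigma> \<tau> s))
       \<and> (\<forall>\<tau>\<ge>0. integral {0..1} (\<lambda>s. \<sigma> \<tau> s) \<le> integral {0..1} (\<lambda>s. (norm (\<xi> \<tau> s))\<^sup>2))
       \<and> (\<exists>L. ((\<lambda>\<tau>. integral {0..1} (\<lambda>s. \<sigma> \<tau> s)) \<longlongrightarrow> L) at_top
              \<and> ((\<lambda>\<tau>. integral {0..1} (\<lambda>s. (norm (\<xi> \<tau> s))\<^sup>2)) \<longlongrightarrow> L) at_top)"
proof -
  interpret normalized_flow \<xi> \<sigma>
    using smooth_xi smooth_sigma per_xi per_sigma arclength centered flow tension
    by unfold_locales
  show ?thesis
    using second_moment_mono second_moment_le total_tension_mono total_tension_le_second_moment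
      total_tension_second_moment_common_limit
    unfolding second_moment_def[abs_def] total_tension_def[abs_def] by auto
qed

end
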